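(* Let $0<q<1$ and let $X$ be a random variable such that $A(a)=\mathbb{E}\exp_q(aX)$ is finite for all $a>0$. Then $\theta(a)=\dfrac{a}{A(a)^{1-q}}$ is an increasing function of $a$ on $(0,\infty)$.
   Context: For $q\in(0,2)$, $q\ne1$, the $q$-deformed exponential is $\exp_q(u)=[1+(1-q)u]_+^{1/(1-q)}$ for real $u$, where $[u]_+=\max(u,0)$. *)

theory Defs
  imports "HOL-Probability.Probability"
begin

definition expq :: "real \<Rightarrow> real \<Rightarrow> real" where
  "expq q u = (max (1 + (1 - q) * u) 0) powr (1 / (1 - q))"

end

theory Submission
  imports Defs
begin

text \<open>With \<open>p = 1/(1-q)\<close>, the scaling \<open>exp_q(a x) = a^p [1/a + (1-q) x]_+^p\<close> gives
  \<open>A(a) = a^p J(a)\<close> with \<open>J(a) = E [1/a + (1-q) X]_+^p\<close>, hence \<open>\<theta>(a) = J(a)^(q-1)\<close>.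
  The integrand of \<open>J\<close> decreases pointwise in \<open>a\<close>, strictly wherever it is positive,
  and \<open>A(a) > 0\<close> forces it to be positive on a set of positive measure; so \<open>J\<close> is
  strictly decreasing and \<open>\<theta>\<close> strictly increasing.\<close>

lemma expq_nonneg: "0 \<le> expq q u"
  unfolding expq_def by simp

lemma expq_mult_div_powr_eq:
  assumes "0 < a" "q < 1"
  shows "expq q (a * x) / a powr (1/(1-q)) = max (1/a + (1-q) * x) 0 powr (1/(1-q))"
proof -
  have "max (1 + (1-q) * (a * x)) 0 = a * max (1/a + (1-q) * x) 0"
    using assms by (simp add: max_def field_simps)
  then show ?thesis
    unfolding expq_def using assms by (simp add: powr_mult)
qed

lemma expq_mult_div_powr_antimono:
  assumes "0 < a" "a \<le> b" "q < 1"
  shows "expq q (b * x) / b powr (1/(1-q)) \<le> expq q (a * x) / a powr (1/(1-q))"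
proof -
  have "1/b \<le> 1/a"
    using assms by (simp add: frac_le)
  then show ?thesis
    using assms by (simp add: expq_mult_div_powr_eq powr_mono2)
qed

lemma expq_mult_div_powr_strict_antimono:
  assumes "0 < a" "a < b" "q < 1" "0 < expq q (a * x)"
  shows "expq q (b * x) / b powr (1/(1-q)) < expq q (a * x) / a powr (1/(1-q))"
proof -
  have "0 < max (1/a + (1-q) * x) 0 powr (1/(1-q))"
    using assms by (simp flip: expq_mult_div_powr_eq)
  then have "0 < 1/a + (1-q) * x"
    by (cases "0 < 1/a + (1-q) * x") auto
  moreover have "1/b < 1/a"
    using assms by (simp add: frac_less2)
  ultimately show ?thesis
    using assms by (simp add: expq_mult_div_powr_eq powr_less_mono2)
qed

lemma integral_less_if_less_where_pos:
  fixes f g :: "'a \<Rightarrow> real"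
  assumes "integrable M f" "integrable M g"
    and le: "\<And>x. x \<in> space M \<Longrightarrow> f x \<le> g x"
    and less: "\<And>x. x \<in> space M \<Longrightarrow> 0 < g x \<Longrightarrow> f x < g x"
    and "0 < integral\<^sup>L M g"
  shows "integral\<^sup>L M f < integral\<^sup>L M g"
proof -
  have "integral\<^sup>L M f \<le> integral\<^sup>L M g"
    using assms by (intro integral_mono) auto
  moreover have "integral\<^sup>L M f \<noteq> integral\<^sup>L M g"
  proof
    assume "integral\<^sup>L M f = integral\<^sup>L M g"
    then have "(\<integral>x. g x - f x \<partial>M) = 0"
      using assms by simp
    then have "AE x in M. g x - f x = 0"
      using assms by (subst integral_nonneg_eq_0_iff_AE[symmetric]) auto
    then have "AE x in M. 0 \<le> - g x"
      using AE_space by eventually_elim (use less in force)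
    then have "0 \<le> (\<integral>x. - g x \<partial>M)"
      by (rule integral_nonneg_AE)
    then show False
      using assms by simp
  qed
  ultimately show ?thesis
    by simp
qed

lemma div_mult_powr_powr_eq:
  fixes c J q :: real
  assumes "0 < c" "0 \<le> J" "q < 1"
  shows "c / (c powr (1/(1-q)) * J) powr (1-q) = 1 / J powr (1-q)"
proof -
  have "(c powr (1/(1-q))) powr (1-q) = c"
    using assms by (simp add: powr_powr)
  then have "(c powr (1/(1-q)) * J) powr (1-q) = c * J powr (1-q)"
    using assms by (simp add: powr_mult)
  then show ?thesis
    using assms by simp
qed

theorem lemma2:
  fixes M :: "'a measure" and X :: "'a \<Rightarrow> real" and q :: real
  assumes "prob_space M"
    and "X \<in> borel_measurable M"
    and "0 < q" and "q < 1"
    and "\<And>a. a > 0 \<Longrightarrow> integrable M (\<lambda>\<omega>. expq q (a * X \<omega>))"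
  shows "strict_mono_on {a::real. a > 0 \<and> (\<integral>\<omega>. expq q (a * X \<omega>) \<partial>M) > 0}
           (\<lambda>a. a / (\<integral>\<omega>. expq q (a * X \<omega>) \<partial>M) powr (1 - q))"
           (is "strict_mono_on ?S ?\<theta>")
proof (rule strict_mono_onI)
  fix a b :: real
  assume "a \<in> ?S" "b \<in> ?S" "a < b"
  then have a: "0 < a" "0 < (\<integral>\<omega>. expq q (a * X \<omega>) \<partial>M)"
    and b: "0 < b" "0 < (\<integral>\<omega>. expq q (b * X \<omega>) \<partial>M)"
    by auto
  define J where "J c = (\<integral>\<omega>. expq q (c * X \<omega>) / c powr (1/(1-q)) \<partial>M)" for c
  have A_eq: "(\<integral>\<omega>. expq q (c * X \<omega>) \<partial>M) = c powr (1/(1-q)) * J c" if "0 < c" for c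
    unfolding J_def using that by simp
  have J_nonneg: "0 \<le> J c" for c
    unfolding J_def by (simp add: expq_nonneg)
  have J_pos: "0 < J c" if "0 < c" "0 < (\<integral>\<omega>. expq q (c * X \<omega>) \<partial>M)" for c
    using that A_eq[of c] by (simp add: zero_less_mult_iff)
  have "0 < J b"
    using J_pos b by blast
  moreover have "J b < J a"
    unfolding J_def
  proof (rule integral_less_if_less_where_pos)
    fix \<omega>
    show "expq q (b * X \<omega>) / b powr (1/(1-q)) \<le> expq q (a * X \<omega>) / a powr (1/(1-q))"
      using a \<open>a < b\<close> assms by (intro expq_mult_div_powr_antimono) auto
    assume "0 < expq q (a * X \<omega>) / a powr (1/(1-q))"
    then show "expq q (b * X \<omega>) / b powr (1/(1-q)) < expq q (a * X \<omega>) / a powr (1/(1-q))"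
      using a \<open>a < b\<close> assms by (intro expq_mult_div_powr_strict_antimono) (auto simp: zero_less_divide_iff)
  qed (use J_pos a b assms(5) in \<open>auto simp: J_def\<close>)
  ultimately show "?\<theta> a < ?\<theta> b"
    using a b assms(4)
    by (simp add: A_eq J_nonneg div_mult_powr_powr_eq divide_strict_left_mono powr_less_mono2)
qed

end
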